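(* Let $N$ be a prime number and $n,t,s$ positive integers with $t\le n$ and $N\ge s+1$. Let $\vec u_1,\dots,\vec u_t\in\mathbb{Z}_N^n$ be linearly independent over $\mathbb{Z}_N$. Let $Q(s)=\{\vec x=(x_1,\dots,x_n)\in\mathbb{Z}_N^n: x_i\in\{0,1,\dots,s\},\ i=1,\dots,n\}$ and $L=\{\sum_{i=1}^t m_i\vec u_i: m_i\in\mathbb{Z}_N\}$. Then $|L\cap Q(s)|\le(s+1)^t$.
   Context: $\mathbb{Z}_N=\mathbb{Z}/N\mathbb{Z}$, viewed as the field with $N$ elements. *)

theory Defs
  imports "HOL-Number_Theory.Number_Theory"
begin

text \<open>Elements of Z_N^n are represented as functions nat => int with entries in
  {0..<N} at coordinates i < n and 0 elsewhere (canonical residues).\<close>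

definition ZNvec :: "int \<Rightarrow> nat \<Rightarrow> (nat \<Rightarrow> int) set" where
  "ZNvec N n = {x. (\<forall>i<n. 0 \<le> x i \<and> x i < N) \<and> (\<forall>i\<ge>n. x i = 0)}"

text \<open>Linear independence over Z_N of u_0,...,u_{t-1} in Z_N^n (indices shifted to 0-based).\<close>
definition lin_indep_ZN :: "int \<Rightarrow> nat \<Rightarrow> nat \<Rightarrow> (nat \<Rightarrow> nat \<Rightarrow> int) \<Rightarrow> bool" where
  "lin_indep_ZN N n t u \<longleftrightarrow>
     (\<forall>m :: nat \<Rightarrow> int. (\<forall>j<n. [(\<Sum>i<t. m i * u i j) = 0] (mod N))
        \<longrightarrow> (\<forall>i<t. [m i = 0] (mod N)))"

definition span_ZN :: "int \<Rightarrow> nat \<Rightarrow> nat \<Rightarrow> (nat \<Rightarrow> nat \<Rightarrow> int) \<Rightarrow> (nat \<Rightarrow> int) set" where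
  "span_ZN N n t u = {x. \<exists>m :: nat \<Rightarrow> int. (\<forall>i<t. 0 \<le> m i \<and> m i < N) \<and>
       (\<forall>j<n. x j = (\<Sum>i<t. m i * u i j) mod N) \<and> (\<forall>j\<ge>n. x j = 0)}"

definition Qbox :: "int \<Rightarrow> nat \<Rightarrow> nat \<Rightarrow> (nat \<Rightarrow> int) set" where
  "Qbox N n s = {x \<in> ZNvec N n. \<forall>i<n. x i \<in> {0..int s}}"

end

theory Submission
  imports Defs
begin

text \<open>Gaussian elimination, one coordinate at a time. Consider the points of an affine coset
  y + span(v_i : i \<in> I) of Z_N^n whose coordinates in a finite set J all lie in {0,...,s}.
  If every generator vanishes in a coordinate j \<in> J, that coordinate is constant on the coset.
  Otherwise some v_k j is invertible mod N, and once the value a \<in> {0,...,s} of coordinate j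
  is fixed, the coefficient of v_k is determined by the others; so each of the s + 1 fibres lies
  in a coset with one generator fewer. By induction on J the count is at most (s + 1)^|I|.\<close>

definition coset_box_points ::
    "int \<Rightarrow> nat \<Rightarrow> ('j \<Rightarrow> int) \<Rightarrow> ('i \<Rightarrow> 'j \<Rightarrow> int) \<Rightarrow> 'i set \<Rightarrow> 'j set \<Rightarrow> ('j \<Rightarrow> int) set" where
  "coset_box_points N s y v I J =
     {f. (\<exists>m. \<forall>j\<in>J. f j = (y j + (\<Sum>i\<in>I. m i * v i j)) mod N) \<and>
         (\<forall>j. (j \<in> J \<longrightarrow> f j \<in> {0..int s}) \<and> (j \<notin> J \<longrightarrow> f j = 0))}"

lemma finite_coset_box_points:
  assumes "finite J"
  shows "finite (coset_box_points N s y v I J)"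
proof (rule finite_subset)
  show "coset_box_points N s y v I J \<subseteq>
      {f. \<forall>j. (j \<in> J \<longrightarrow> f j \<in> {0..int s}) \<and> (j \<notin> J \<longrightarrow> f j = 0)}"
    unfolding coset_box_points_def by blast
  show "finite {f. \<forall>j. (j \<in> J \<longrightarrow> f j \<in> {0..int s}) \<and> (j \<notin> J \<longrightarrow> f j = (0::int))}"
    using assms by (intro finite_set_of_finite_funs) auto
qed

lemma coset_box_points_empty_subset: "coset_box_points N s y v I {} \<subseteq> {\<lambda>_. 0}"
  unfolding coset_box_points_def by auto

lemma coset_box_points_insert_constant_coord:
  assumes "j \<notin> J" and "\<forall>i\<in>I. N dvd v i j"
  shows "coset_box_points N s y v I (insert j J) \<subseteq>
    (\<lambda>g. g(j := y j mod N)) ` coset_box_points N s y v I J"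
proof
  fix f assume "f \<in> coset_box_points N s y v I (insert j J)"
  then obtain m where m: "\<forall>j'\<in>insert j J. f j' = (y j' + (\<Sum>i\<in>I. m i * v i j')) mod N"
    and box: "\<forall>j'. (j' \<in> insert j J \<longrightarrow> f j' \<in> {0..int s}) \<and> (j' \<notin> insert j J \<longrightarrow> f j' = 0)"
    unfolding coset_box_points_def by blast
  have "N dvd (\<Sum>i\<in>I. m i * v i j)"
    using assms(2) by (intro dvd_sum) simp
  then have "(y j + (\<Sum>i\<in>I. m i * v i j)) mod N = y j mod N"
    by (simp add: dvd_add_right_iff mod_eq_dvd_iff)
  then have "f j = y j mod N"
    using m by simp
  moreover have "f(j := 0) \<in> coset_box_points N s y v I J"
    unfolding coset_box_points_def using m box assms(1) by auto
  ultimately show "f \<in> (\<lambda>g. g(j := y j mod N)) ` coset_box_points N s y v I J"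
    by (intro image_eqI[of _ _ "f(j := 0)"]) auto
qed

text \<open>Solving [a = y0 + m_k p + T] (mod N) for m_k with w = p^(-1) gives m_k = (a - y0 - T) w;
  substituting this into another coordinate y' + m_k q + S yields the left-hand side.\<close>

lemma cong_eliminate_coefficient:
  fixes N :: int
  assumes "[a = y0 + mk * p + T] (mod N)" and "[p * w = 1] (mod N)"
  shows "[y' + (a - y0) * w * q + (S - T * w * q) = y' + mk * q + S] (mod N)"
proof -
  have "N dvd (a - y0 - mk * p - T)" and "N dvd (p * w - 1)"
    using assms by (simp_all add: cong_iff_dvd_diff dvd_diff_commute algebra_simps)
  then have "N dvd q * ((a - y0 - mk * p - T) * w + mk * (p * w - 1))"
    by simp
  moreover have "q * ((a - y0 - mk * p - T) * w + mk * (p * w - 1)) =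
      (y' + (a - y0) * w * q + (S - T * w * q)) - (y' + mk * q + S)"
    by (simp add: algebra_simps)
  ultimately show ?thesis
    by (simp add: cong_iff_dvd_diff)
qed

lemma coset_box_points_insert_pivot:
  assumes "j \<notin> J" and "finite I" and "k \<in> I" and inv: "[v k j * w = 1] (mod N)"
  shows "coset_box_points N s y v I (insert j J) \<subseteq>
    (\<Union>a\<in>{0..int s}. (\<lambda>g. g(j := a)) `
       coset_box_points N s (\<lambda>j'. y j' + (a - y j) * w * v k j')
         (\<lambda>i j'. v i j' - v i j * w * v k j') (I - {k}) J)"
    (is "_ \<subseteq> (\<Union>a\<in>_. _ ` coset_box_points N s (?y a) ?v _ J)")
proof
  fix f assume "f \<in> coset_box_points N s y v I (insert j J)"
  then obtain m where m: "\<forall>j'\<in>insert j J. f j' = (y j' + (\<Sum>i\<in>I. m i * v i j')) mod N"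
    and box: "\<forall>j'. (j' \<in> insert j J \<longrightarrow> f j' \<in> {0..int s}) \<and> (j' \<notin> insert j J \<longrightarrow> f j' = 0)"
    unfolding coset_box_points_def by blast
  have split_k: "(\<Sum>i\<in>I. m i * v i j') = m k * v k j' + (\<Sum>i\<in>I - {k}. m i * v i j')" for j'
    using assms(2,3) by (simp add: sum.remove)
  have pivot_coord: "[f j = y j + m k * v k j + (\<Sum>i\<in>I - {k}. m i * v i j)] (mod N)"
    using m by (simp add: cong_def split_k add.assoc)
  have "f j' = (?y (f j) j' + (\<Sum>i\<in>I - {k}. m i * ?v i j')) mod N" if "j' \<in> J" for j'
  proof -
    have "(\<Sum>i\<in>I - {k}. m i * ?v i j') =
        (\<Sum>i\<in>I - {k}. m i * v i j') - (\<Sum>i\<in>I - {k}. m i * v i j) * w * v k j'"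
      by (simp add: sum_subtractf sum_distrib_left sum_distrib_right algebra_simps)
    then have "[?y (f j) j' + (\<Sum>i\<in>I - {k}. m i * ?v i j') =
        y j' + (\<Sum>i\<in>I. m i * v i j')] (mod N)"
      using cong_eliminate_coefficient[OF pivot_coord inv] by (simp add: split_k add.assoc)
    then show ?thesis
      using m that by (simp add: cong_def)
  qed
  then have "f(j := 0) \<in> coset_box_points N s (?y (f j)) ?v (I - {k}) J"
    unfolding coset_box_points_def using box assms(1) by (auto intro!: exI[of _ m])
  moreover have "f j \<in> {0..int s}"
    using box by blast
  ultimately show "f \<in> (\<Union>a\<in>{0..int s}. (\<lambda>g. g(j := a)) ` coset_box_points N s (?y a) ?v (I - {k}) J)"
    by (intro UN_I[of "f j"] image_eqI[of _ _ "f(j := 0)"]) auto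
qed

lemma card_coset_box_points_le:
  assumes "prime N" and "finite I" and "finite J"
  shows "card (coset_box_points N s y v I J) \<le> (s + 1) ^ card I"
  using assms(3,2)
proof (induction J arbitrary: I y v rule: finite_induct)
  case empty
  have "card (coset_box_points N s y v I {}) \<le> 1"
    using card_mono[OF _ coset_box_points_empty_subset] by simp
  also have "1 \<le> (s + 1) ^ card I"
    by simp
  finally show ?case .
next
  case (insert j J)
  consider (vanishing) "\<forall>i\<in>I. N dvd v i j" | (pivot) k where "k \<in> I" and "\<not> N dvd v k j"
    by blast
  then show ?case
  proof cases
    case vanishing
    have "card (coset_box_points N s y v I (insert j J))
        \<le> card ((\<lambda>g. g(j := y j mod N)) ` coset_box_points N s y v I J)"
      using coset_box_points_insert_constant_coord[where v = v, OF insert.hyps(2) vanishing]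
      by (intro card_mono finite_imageI finite_coset_box_points insert.hyps(1))
    also have "\<dots> \<le> card (coset_box_points N s y v I J)"
      by (rule card_image_le) (rule finite_coset_box_points[OF insert.hyps(1)])
    also have "\<dots> \<le> (s + 1) ^ card I"
      by (rule insert.IH[OF insert.prems])
    finally show ?thesis .
  next
    case pivot
    have "coprime (v k j) N"
      using prime_imp_coprime[OF assms(1) pivot(2)] by (simp add: coprime_commute)
    then obtain w where inv: "[v k j * w = 1] (mod N)"
      using cong_solve_coprime_int by blast
    define C where "C a = coset_box_points N s (\<lambda>j'. y j' + (a - y j) * w * v k j')
      (\<lambda>i j'. v i j' - v i j * w * v k j') (I - {k}) J" for a
    have card_C: "card (C a) \<le> (s + 1) ^ card (I - {k})" for a
      unfolding C_def using insert.prems by (intro insert.IH) simp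
    have "card (coset_box_points N s y v I (insert j J))
        \<le> card (\<Union>a\<in>{0..int s}. (\<lambda>g. g(j := a)) ` C a)"
      using coset_box_points_insert_pivot[where v = v and y = y, OF insert.hyps(2) insert.prems pivot(1) inv]
      unfolding C_def
      by (intro card_mono) (auto intro: finite_coset_box_points insert.hyps(1))
    also have "\<dots> \<le> (\<Sum>a\<in>{0..int s}. card ((\<lambda>g. g(j := a)) ` C a))"
      by (rule card_UN_le) simp
    also have "\<dots> \<le> (\<Sum>a\<in>{0..int s}. (s + 1) ^ card (I - {k}))"
      by (intro sum_mono le_trans[OF card_image_le card_C])
        (simp add: C_def finite_coset_box_points insert.hyps(1))
    also have "\<dots> = (s + 1) ^ card I"
      by (simp add: nat_add_distrib card_Suc_Diff1[OF insert.prems pivot(1), symmetric])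
    finally show ?thesis .
  qed
qed

lemma span_ZN_inter_Qbox_subset:
  "span_ZN N n t u \<inter> Qbox N n s \<subseteq> coset_box_points N s (\<lambda>_. 0) u {..<t} {..<n}"
  unfolding span_ZN_def Qbox_def coset_box_points_def by auto

theorem lemma24:
  fixes N :: int and n t s :: nat and u :: "nat \<Rightarrow> nat \<Rightarrow> int"
  assumes "prime N" and "0 < n" and "0 < t" and "0 < s" and "t \<le> n" and "N \<ge> int s + 1"
    and "\<forall>i<t. u i \<in> ZNvec N n"
    and "lin_indep_ZN N n t u"
  shows "card (span_ZN N n t u \<inter> Qbox N n s) \<le> (s + 1) ^ t"
proof -
  have "card (span_ZN N n t u \<inter> Qbox N n s) \<le> card (coset_box_points N s (\<lambda>_. 0) u {..<t} {..<n})"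
    by (intro card_mono finite_coset_box_points span_ZN_inter_Qbox_subset) simp
  also have "\<dots> \<le> (s + 1) ^ t"
    using card_coset_box_points_le[OF assms(1), of "{..<t}" "{..<n}"] by simp
  finally show ?thesis .
qed

end
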